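(* Let $a,b,k$ be positive integers. If the player cannot win the $(a,b)$-game, then the player cannot win the $(a,bk)$-game.
   Context: The $(n,m)$-game: $n$ counters at positions $1,\dots,n$ (vertices in cyclic order of a regular $n$-gon table), each showing an element of $\mathbb{Z}_m$; a configuration is a vector in $\mathbb{Z}_m^n$, initially arbitrary and unknown. Each turn the player chooses a move $y\in\mathbb{Z}_m^n$ added coordinatewise, then the table is rotated by an adversarially chosen $k\in\mathbb{Z}_n$, replacing $x$ by $x'$ with $x'_{i+k}=x_i$ (indices mod $n$). The player wins if at some moment (including initially) all counters show $0$. A strategy is a finite sequence of moves; it is winning if it forces the zero configuration at some time for every initial configuration and every choice of rotations. "The player can win" means a winning finite sequence exists. *)

theory Defs
  imports Main
begin

text \<open>Positions are 0..n-1 (indices mod n); a configuration is a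
function nat => int whose values at positions i < n are read modulo m (so it
represents an element of Z_m^n).\<close>

definition rot :: "nat \<Rightarrow> nat \<Rightarrow> (nat \<Rightarrow> int) \<Rightarrow> (nat \<Rightarrow> int)" where
  "rot n k x = (\<lambda>j. x ((j + n - k mod n) mod n))"

fun play :: "nat \<Rightarrow> (nat \<Rightarrow> int) \<Rightarrow> (nat \<Rightarrow> int) list \<Rightarrow> (nat \<Rightarrow> nat) \<Rightarrow> nat \<Rightarrow> (nat \<Rightarrow> int)" where
  "play n x ys ks 0 = x"
| "play n x ys ks (Suc t) = rot n (ks t) (\<lambda>i. play n x ys ks t i + (ys ! t) i)"

definition is_zero_config :: "nat \<Rightarrow> nat \<Rightarrow> (nat \<Rightarrow> int) \<Rightarrow> bool" where
  "is_zero_config n m x \<longleftrightarrow> (\<forall>i<n. x i mod int m = 0)"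

definition winning_strategy :: "nat \<Rightarrow> nat \<Rightarrow> (nat \<Rightarrow> int) list \<Rightarrow> bool" where
  "winning_strategy n m ys \<longleftrightarrow>
     (\<forall>x ks. \<exists>t\<le>length ys. is_zero_config n m (play n x ys ks t))"

definition can_win :: "nat \<Rightarrow> nat \<Rightarrow> bool" where
  "can_win n m \<longleftrightarrow> (\<exists>ys. winning_strategy n m ys)"

end

theory Submission
  imports Defs
begin

text \<open>Configurations and moves are integer representatives, so reducing them modulo b
instead of modulo b * k leaves every play unchanged; only the test for the zero
configuration becomes weaker, and a winning strategy for the (a, b k)-game therefore
wins the (a, b)-game too.\<close>

lemma is_zero_config_dvd:
  assumes "m dvd m'" and "is_zero_config n m' x"
  shows "is_zero_config n m x"
  using assms unfolding is_zero_config_def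
  by (meson dvd_trans int_dvd_int_iff mod_0_imp_dvd dvd_imp_mod_0)

lemma winning_strategy_dvd:
  assumes "m dvd m'" and "winning_strategy n m' ys"
  shows "winning_strategy n m ys"
  using assms is_zero_config_dvd unfolding winning_strategy_def by blast

lemma can_win_dvd:
  assumes "m dvd m'" and "can_win n m'"
  shows "can_win n m"
  using assms winning_strategy_dvd unfolding can_win_def by blast

theorem lemma3p2:
  fixes a b k :: nat
  assumes "a > 0" and "b > 0" and "k > 0"
    and "\<not> can_win a b"
  shows "\<not> can_win a (b * k)"
  using assms(4) can_win_dvd[of b "b * k" a] by auto

end
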